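(* Let $\Gamma$ be a finite connected $d$-valent graph with a GKM axial function $\alpha$, a compatible connection $\theta$, and a polarizing vector $\xi$, and suppose $\Gamma$ admits a family of Thom classes $\{\tau_p^+\}_{p\in V_\Gamma}$ as in the context. Let $e$ be an ascending edge from $p$ to $q$. If $e$ is the only ascending path from $p$ to $q$, then $\sigma_q\le\sigma_p+1$.
   Context: $\mathfrak g$ is the Lie algebra of a torus $G$, $\mathfrak S(\mathfrak g^* )$ the polynomial ring on $\mathfrak g$, graded by degree. Oriented edges $e$ have initial vertex $i(e)$, terminal vertex $t(e)$, and reverse $\bar e$; $E_p=\{e:i(e)=p\}$. An axial function $\alpha:e\mapsto\alpha_e\in\mathfrak g^*$ satisfies $\alpha_{\bar e}=-\alpha_e$ and is GKM if for each $p$ the $\alpha_e$, $e\in E_p$, are pairwise linearly independent. A compatible connection assigns to each oriented $e$ a bijection $\theta_e:E_{i(e)}\to E_{t(e)}$ with $\theta_{\bar e}=\theta_e^{-1}$, $\theta_e(e)=\bar e$, and $\alpha_{\theta_e(e')}-\alpha_{e'}\in\mathbb R\alpha_e$ for $e'\in E_{i(e)}$. $H(\Gamma,\alpha)$ is the ring of maps $h:V_\Gamma\to\mathfrak S(\mathfrak g^* )$ with $\alpha_e\mid h(i(e))-h(t(e))$ for every edge; $H^k$ consists of those with values in degree-$k$ polynomials; it is a module over $\mathfrak S(\mathfrak g^* )$. $\xi\in\mathfrak g$ is polarizing if $\alpha_e(\xi)\ne0$ for all $e$; $e$ is ascending if $\alpha_e(\xi)>0$, descending otherwise; paths are ascending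 if all edges are. $\sigma_p$ = number of descending edges in $E_p$, $E_p^-$ the set of these; $F_p$ = vertices reachable from $p$ by an ascending path (including $p$). A family of Thom classes is a family $\tau_p^+\in H^{\sigma_p}(\Gamma,\alpha)$, $p\in V_\Gamma$, freely generating $H(\Gamma,\alpha)$ as an $\mathfrak S(\mathfrak g^* )$-module, with $\tau_p^+$ vanishing outside $F_p$ and $\tau_p^+(p)=\prod_{e\in E_p^-}\alpha_e$. *)

theory Defs
  imports Complex_Main "HOL-Library.Poly_Mapping"
begin

text \<open>The torus Lie algebra g is modelled as real^'n for a finite index type 'n;
  elements of g (e.g. the polarizing vector) and of g* (axial values) are functions
  'n => real (coordinates w.r.t. a basis and its dual basis).  The symmetric algebra
  S(g*) is the real polynomial ring in the variables indexed by 'n, realised as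
  finitely supported maps from monomials (exponent vectors) to coefficients.\<close>

type_synonym 'n spoly = "('n \<Rightarrow>\<^sub>0 nat) \<Rightarrow>\<^sub>0 real"

definition lin :: "('n::finite \<Rightarrow> real) \<Rightarrow> 'n spoly" where
  "lin a = (\<Sum>i\<in>UNIV. Poly_Mapping.single (Poly_Mapping.single i 1) (a i))"

definition homogeneous :: "nat \<Rightarrow> 'n spoly \<Rightarrow> bool" where
  "homogeneous k P \<longleftrightarrow> (\<forall>m\<in>Poly_Mapping.keys P. (\<Sum>i\<in>Poly_Mapping.keys m. Poly_Mapping.lookup m i) = k)"

definition pair_ev :: "('n::finite \<Rightarrow> real) \<Rightarrow> ('n \<Rightarrow> real) \<Rightarrow> real" where
  "pair_ev a \<xi> = (\<Sum>i\<in>UNIV. a i * \<xi> i)"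

definition lin_indep2 :: "('n \<Rightarrow> real) \<Rightarrow> ('n \<Rightarrow> real) \<Rightarrow> bool" where
  "lin_indep2 a b \<longleftrightarrow> (\<forall>x y::real. (\<forall>i. x * a i + y * b i = 0) \<longrightarrow> x = 0 \<and> y = 0)"

definition out_edges :: "'e set \<Rightarrow> ('e \<Rightarrow> 'v) \<Rightarrow> 'v \<Rightarrow> 'e set" where
  "out_edges E ie p = {e\<in>E. ie e = p}"

definition is_graph :: "'v set \<Rightarrow> 'e set \<Rightarrow> ('e \<Rightarrow> 'v) \<Rightarrow> ('e \<Rightarrow> 'v) \<Rightarrow> ('e \<Rightarrow> 'e) \<Rightarrow> bool" where
  "is_graph V E ie te rv \<longleftrightarrow> finite V \<and> finite E \<and>
     (\<forall>e\<in>E. ie e \<in> V \<and> te e \<in> V \<and> rv e \<in> E \<and> rv e \<noteq> e \<and> rv (rv e) = e \<and>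
             ie (rv e) = te e \<and> te (rv e) = ie e)"

primrec is_path :: "'e set \<Rightarrow> ('e \<Rightarrow> 'v) \<Rightarrow> ('e \<Rightarrow> 'v) \<Rightarrow> 'v \<Rightarrow> 'e list \<Rightarrow> 'v \<Rightarrow> bool" where
  "is_path E ie te p [] q \<longleftrightarrow> p = q"
| "is_path E ie te p (e # es) q \<longleftrightarrow> e \<in> E \<and> ie e = p \<and> is_path E ie te (te e) es q"

definition connected_graph :: "'v set \<Rightarrow> 'e set \<Rightarrow> ('e \<Rightarrow> 'v) \<Rightarrow> ('e \<Rightarrow> 'v) \<Rightarrow> bool" where
  "connected_graph V E ie te \<longleftrightarrow> (\<forall>p\<in>V. \<forall>q\<in>V. \<exists>es. is_path E ie te p es q)"

definition regular :: "nat \<Rightarrow> 'v set \<Rightarrow> 'e set \<Rightarrow> ('e \<Rightarrow> 'v) \<Rightarrow> bool" where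
  "regular d V E ie \<longleftrightarrow> (\<forall>p\<in>V. card (out_edges E ie p) = d)"

definition axial :: "'e set \<Rightarrow> ('e \<Rightarrow> 'e) \<Rightarrow> ('e \<Rightarrow> 'n \<Rightarrow> real) \<Rightarrow> bool" where
  "axial E rv \<alpha> \<longleftrightarrow> (\<forall>e\<in>E. \<alpha> (rv e) = - \<alpha> e)"

definition GKM_axial :: "'v set \<Rightarrow> 'e set \<Rightarrow> ('e \<Rightarrow> 'v) \<Rightarrow> ('e \<Rightarrow> 'e) \<Rightarrow> ('e \<Rightarrow> 'n \<Rightarrow> real) \<Rightarrow> bool" where
  "GKM_axial V E ie rv \<alpha> \<longleftrightarrow> axial E rv \<alpha> \<and>
     (\<forall>p\<in>V. \<forall>e\<in>out_edges E ie p. \<forall>e'\<in>out_edges E ie p. e \<noteq> e' \<longrightarrow> lin_indep2 (\<alpha> e) (\<alpha> e'))"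

definition compatible_connection ::
  "'e set \<Rightarrow> ('e \<Rightarrow> 'v) \<Rightarrow> ('e \<Rightarrow> 'v) \<Rightarrow> ('e \<Rightarrow> 'e) \<Rightarrow> ('e \<Rightarrow> 'n \<Rightarrow> real) \<Rightarrow> ('e \<Rightarrow> 'e \<Rightarrow> 'e) \<Rightarrow> bool" where
  "compatible_connection E ie te rv \<alpha> \<theta> \<longleftrightarrow>
     (\<forall>e\<in>E. bij_betw (\<theta> e) (out_edges E ie (ie e)) (out_edges E ie (te e)) \<and>
            (\<forall>e'\<in>out_edges E ie (ie e). \<theta> (rv e) (\<theta> e e') = e') \<and>
            \<theta> e e = rv e \<and>
            (\<forall>e'\<in>out_edges E ie (ie e). \<exists>c::real. \<alpha> (\<theta> e e') - \<alpha> e' = (\<lambda>i. c * \<alpha> e i)))"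

definition polarizing :: "'e set \<Rightarrow> ('e \<Rightarrow> 'n::finite \<Rightarrow> real) \<Rightarrow> ('n \<Rightarrow> real) \<Rightarrow> bool" where
  "polarizing E \<alpha> \<xi> \<longleftrightarrow> (\<forall>e\<in>E. pair_ev (\<alpha> e) \<xi> \<noteq> 0)"

definition ascending :: "('e \<Rightarrow> 'n::finite \<Rightarrow> real) \<Rightarrow> ('n \<Rightarrow> real) \<Rightarrow> 'e \<Rightarrow> bool" where
  "ascending \<alpha> \<xi> e \<longleftrightarrow> pair_ev (\<alpha> e) \<xi> > 0"

definition asc_path ::
  "'e set \<Rightarrow> ('e \<Rightarrow> 'v) \<Rightarrow> ('e \<Rightarrow> 'v) \<Rightarrow> ('e \<Rightarrow> 'n::finite \<Rightarrow> real) \<Rightarrow> ('n \<Rightarrow> real) \<Rightarrow> 'v \<Rightarrow> 'e list \<Rightarrow> 'v \<Rightarrow> bool" where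
  "asc_path E ie te \<alpha> \<xi> p es q \<longleftrightarrow> is_path E ie te p es q \<and> (\<forall>e\<in>set es. ascending \<alpha> \<xi> e)"

definition desc_edges :: "'e set \<Rightarrow> ('e \<Rightarrow> 'v) \<Rightarrow> ('e \<Rightarrow> 'n::finite \<Rightarrow> real) \<Rightarrow> ('n \<Rightarrow> real) \<Rightarrow> 'v \<Rightarrow> 'e set" where
  "desc_edges E ie \<alpha> \<xi> p = {e\<in>out_edges E ie p. \<not> ascending \<alpha> \<xi> e}"

definition sigma :: "'e set \<Rightarrow> ('e \<Rightarrow> 'v) \<Rightarrow> ('e \<Rightarrow> 'n::finite \<Rightarrow> real) \<Rightarrow> ('n \<Rightarrow> real) \<Rightarrow> 'v \<Rightarrow> nat" where
  "sigma E ie \<alpha> \<xi> p = card (desc_edges E ie \<alpha> \<xi> p)"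

definition flow_up ::
  "'v set \<Rightarrow> 'e set \<Rightarrow> ('e \<Rightarrow> 'v) \<Rightarrow> ('e \<Rightarrow> 'v) \<Rightarrow> ('e \<Rightarrow> 'n::finite \<Rightarrow> real) \<Rightarrow> ('n \<Rightarrow> real) \<Rightarrow> 'v \<Rightarrow> 'v set" where
  "flow_up V E ie te \<alpha> \<xi> p = {q\<in>V. \<exists>es. asc_path E ie te \<alpha> \<xi> p es q}"

definition GKM_ring ::
  "'v set \<Rightarrow> 'e set \<Rightarrow> ('e \<Rightarrow> 'v) \<Rightarrow> ('e \<Rightarrow> 'v) \<Rightarrow> ('e \<Rightarrow> 'n::finite \<Rightarrow> real) \<Rightarrow> ('v \<Rightarrow> 'n spoly) set" where
  "GKM_ring V E ie te \<alpha> = {h. (\<forall>x. x \<notin> V \<longrightarrow> h x = 0) \<and>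
                               (\<forall>e\<in>E. lin (\<alpha> e) dvd (h (ie e) - h (te e)))}"

definition GKM_ring_deg ::
  "'v set \<Rightarrow> 'e set \<Rightarrow> ('e \<Rightarrow> 'v) \<Rightarrow> ('e \<Rightarrow> 'v) \<Rightarrow> ('e \<Rightarrow> 'n::finite \<Rightarrow> real) \<Rightarrow> nat \<Rightarrow> ('v \<Rightarrow> 'n spoly) set" where
  "GKM_ring_deg V E ie te \<alpha> k = {h\<in>GKM_ring V E ie te \<alpha>. \<forall>p\<in>V. homogeneous k (h p)}"

definition thom_classes ::
  "'v set \<Rightarrow> 'e set \<Rightarrow> ('e \<Rightarrow> 'v) \<Rightarrow> ('e \<Rightarrow> 'v) \<Rightarrow> ('e \<Rightarrow> 'n::finite \<Rightarrow> real) \<Rightarrow> ('n \<Rightarrow> real)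
    \<Rightarrow> ('v \<Rightarrow> 'v \<Rightarrow> 'n spoly) \<Rightarrow> bool" where
  "thom_classes V E ie te \<alpha> \<xi> \<tau> \<longleftrightarrow>
     (\<forall>p\<in>V. \<tau> p \<in> GKM_ring_deg V E ie te \<alpha> (sigma E ie \<alpha> \<xi> p) \<and>
             (\<forall>q\<in>V - flow_up V E ie te \<alpha> \<xi> p. \<tau> p q = 0) \<and>
             \<tau> p p = (\<Prod>e\<in>desc_edges E ie \<alpha> \<xi> p. lin (\<alpha> e))) \<and>
     (\<forall>h\<in>GKM_ring V E ie te \<alpha>. \<exists>!f. (\<forall>p. p \<notin> V \<longrightarrow> f p = 0) \<and>
          h = (\<lambda>q. \<Sum>p\<in>V. f p * \<tau> p q))"

end

theory Submission imports Defs "HOL-Computational_Algebra.Polynomial"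
begin

text \<open>Let D be the set of descending edges at q other than the reverse of e.  For e' in D
  the far end r of e' lies outside F_p, since appending the reverse of e' to an ascending path
  from p to r would give a second ascending path from p to q; hence \<tau>_p(r) = 0, and \<alpha>_e'
  divides \<tau>_p(q).  Moreover \<tau>_p(q) is congruent modulo \<alpha>_e to \<tau>_p(p), the product of the
  \<alpha>_e'' over the descending edges e'' at p, none of which is proportional to \<alpha>_e.  So \<tau>_p(q)
  is a nonzero polynomial of degree \<sigma>_p with \<sigma>_q - 1 pairwise independent linear factors.
  On a generic line a + t\<xi> these factors become distinct linear polynomials in t, whence
  \<sigma>_q - 1 \<le> \<sigma>_p.\<close>

definition monomial_eval :: "('n::finite \<Rightarrow> real poly) \<Rightarrow> ('n \<Rightarrow>\<^sub>0 nat) \<Rightarrow> real poly" where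
  "monomial_eval x m = (\<Prod>i\<in>UNIV. x i ^ Poly_Mapping.lookup m i)"

definition spoly_eval :: "('n::finite \<Rightarrow> real poly) \<Rightarrow> 'n spoly \<Rightarrow> real poly" where
  "spoly_eval x P = (\<Sum>m\<in>Poly_Mapping.keys P. smult (Poly_Mapping.lookup P m) (monomial_eval x m))"

lemma monomial_eval_add: "monomial_eval x (m + m') = monomial_eval x m * monomial_eval x m'"
  by (simp add: monomial_eval_def lookup_add power_add prod.distrib)

lemma monomial_eval_single: "monomial_eval x (Poly_Mapping.single i (Suc 0)) = x i"
proof -
  have "monomial_eval x (Poly_Mapping.single i (Suc 0)) = (\<Prod>j\<in>UNIV. if j = i then x i else 1)"
    unfolding monomial_eval_def by (rule prod.cong) (auto simp: lookup_single when_def)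
  then show ?thesis by (simp add: prod.delta)
qed

lemma degree_monomial_eval:
  assumes "\<And>i. degree (x i) \<le> 1"
  shows "degree (monomial_eval x m) \<le> (\<Sum>i\<in>Poly_Mapping.keys m. Poly_Mapping.lookup m i)"
proof -
  have "degree (monomial_eval x m) \<le> (\<Sum>i\<in>UNIV. degree (x i ^ Poly_Mapping.lookup m i))"
    unfolding monomial_eval_def
    using degree_prod_sum_le[OF finite_UNIV, of "\<lambda>i. x i ^ Poly_Mapping.lookup m i"] by (simp add: o_def)
  also have "\<dots> \<le> (\<Sum>i\<in>UNIV. Poly_Mapping.lookup m i)"
  proof (rule sum_mono)
    fix i
    have "degree (x i ^ Poly_Mapping.lookup m i) \<le> degree (x i) * Poly_Mapping.lookup m i"
      by (rule degree_power_le)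
    also have "\<dots> \<le> Poly_Mapping.lookup m i" using assms[of i] by simp
    finally show "degree (x i ^ Poly_Mapping.lookup m i) \<le> Poly_Mapping.lookup m i" .
  qed
  also have "\<dots> = (\<Sum>i\<in>Poly_Mapping.keys m. Poly_Mapping.lookup m i)"
    by (rule sum.mono_neutral_right) (auto simp: in_keys_iff)
  finally show ?thesis .
qed

lemma poly_mapping_sum_single:
  "P = (\<Sum>m\<in>Poly_Mapping.keys P. Poly_Mapping.single m (Poly_Mapping.lookup P m))"
  by (rule poly_mapping_eqI)
    (auto simp: lookup_sum lookup_single when_def in_keys_iff intro: sym[OF trans[OF sum.remove]])

lemma spoly_eval_superset:
  assumes "finite S" "Poly_Mapping.keys P \<subseteq> S"
  shows "spoly_eval x P = (\<Sum>m\<in>S. smult (Poly_Mapping.lookup P m) (monomial_eval x m))"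
  unfolding spoly_eval_def
  by (rule sum.mono_neutral_left[OF assms]) (auto simp: in_keys_iff)

lemma spoly_eval_zero [simp]: "spoly_eval x 0 = 0"
  by (simp add: spoly_eval_def)

lemma spoly_eval_single [simp]: "spoly_eval x (Poly_Mapping.single m c) = smult c (monomial_eval x m)"
  by (cases "c = 0") (auto simp: spoly_eval_def)

lemma spoly_eval_one [simp]: "spoly_eval x 1 = 1"
  by (simp add: monomial_eval_def flip: single_one)

lemma spoly_eval_add: "spoly_eval x (P + Q) = spoly_eval x P + spoly_eval x Q"
proof -
  let ?S = "Poly_Mapping.keys P \<union> Poly_Mapping.keys Q"
  have "spoly_eval x (P + Q) = (\<Sum>m\<in>?S. smult (Poly_Mapping.lookup (P + Q) m) (monomial_eval x m))"
    by (rule spoly_eval_superset) (auto simp: keys_add)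
  also have "\<dots> = (\<Sum>m\<in>?S. smult (Poly_Mapping.lookup P m) (monomial_eval x m))
      + (\<Sum>m\<in>?S. smult (Poly_Mapping.lookup Q m) (monomial_eval x m))"
    by (simp add: lookup_add smult_add_left sum.distrib)
  also have "\<dots> = spoly_eval x P + spoly_eval x Q"
    by (subst (1 2) spoly_eval_superset[of ?S]) auto
  finally show ?thesis .
qed

lemma spoly_eval_diff: "spoly_eval x (P - Q) = spoly_eval x P - spoly_eval x Q"
  using spoly_eval_add[of x "P - Q" Q] by (simp add: algebra_simps)

lemma spoly_eval_sum: "spoly_eval x (\<Sum>a\<in>A. f a) = (\<Sum>a\<in>A. spoly_eval x (f a))"
  by (induction A rule: infinite_finite_induct) (auto simp: spoly_eval_add)

lemma spoly_eval_mult: "spoly_eval x (P * Q) = spoly_eval x P * spoly_eval x Q"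
proof -
  have "P * Q = (\<Sum>m\<in>Poly_Mapping.keys P. \<Sum>m'\<in>Poly_Mapping.keys Q.
      Poly_Mapping.single m (Poly_Mapping.lookup P m) * Poly_Mapping.single m' (Poly_Mapping.lookup Q m'))"
    by (subst (1) poly_mapping_sum_single, subst (1) poly_mapping_sum_single[of Q]) (rule sum_product)
  then have "spoly_eval x (P * Q) = (\<Sum>m\<in>Poly_Mapping.keys P. \<Sum>m'\<in>Poly_Mapping.keys Q.
      smult (Poly_Mapping.lookup P m) (monomial_eval x m) * smult (Poly_Mapping.lookup Q m') (monomial_eval x m'))"
    by (simp add: spoly_eval_sum mult_single monomial_eval_add mult.commute mult.left_commute)
  also have "\<dots> = spoly_eval x P * spoly_eval x Q"
    by (simp only: spoly_eval_def sum_product)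
  finally show ?thesis .
qed

lemma spoly_eval_prod: "spoly_eval x (\<Prod>a\<in>A. f a) = (\<Prod>a\<in>A. spoly_eval x (f a))"
  by (induction A rule: infinite_finite_induct) (auto simp: spoly_eval_mult)

lemma spoly_eval_dvd: "P dvd Q \<Longrightarrow> spoly_eval x P dvd spoly_eval x Q"
  by (auto simp: spoly_eval_mult dvd_def)

lemma degree_spoly_eval:
  assumes "\<And>i. degree (x i) \<le> 1" "homogeneous k P"
  shows "degree (spoly_eval x P) \<le> k"
  unfolding spoly_eval_def
proof (rule degree_sum_le)
  fix m assume "m \<in> Poly_Mapping.keys P"
  then have "(\<Sum>i\<in>Poly_Mapping.keys m. Poly_Mapping.lookup m i) = k"
    using assms(2) by (simp add: homogeneous_def)
  then show "degree (smult (Poly_Mapping.lookup P m) (monomial_eval x m)) \<le> k"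
    using degree_monomial_eval[of x m, OF assms(1)] degree_smult_le[of "Poly_Mapping.lookup P m"]
    by (meson order_trans)
qed simp

lemma pair_ev_uminus: "pair_ev (- c) x = - pair_ev c x"
  by (simp add: pair_ev_def sum_negf)

lemma pair_ev_line: "pair_ev c (\<lambda>i. a i + t * b i) = pair_ev c a + t * pair_ev c b"
  by (simp add: pair_ev_def algebra_simps sum.distrib sum_distrib_left)

lemma pair_ev_self_pos:
  assumes "c \<noteq> (\<lambda>_. 0)"
  shows "pair_ev c c > 0"
proof -
  obtain i where "c i \<noteq> 0" using assms by (auto simp: fun_eq_iff)
  then show ?thesis unfolding pair_ev_def
    by (intro sum_pos2[where i=i]) (auto simp: not_square_less_zero zero_less_mult_iff)
qed

text \<open>Induction on G, moving the point a along g to a + t g: every h with h(g) \<noteq> 0, among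
  them g itself, excludes one value of t, and every other h keeps its nonzero value at a.\<close>

lemma ex_point_off_hyperplanes:
  fixes G :: "('n::finite \<Rightarrow> real) set"
  assumes "finite G" "(\<lambda>_. 0) \<notin> G"
  shows "\<exists>a. \<forall>g\<in>G. pair_ev g a \<noteq> 0"
  using assms
proof (induction G rule: finite_induct)
  case (insert g G)
  then obtain a where a: "\<forall>h\<in>G. pair_ev h a \<noteq> 0" by auto
  have gg: "pair_ev g g > 0" using insert.prems by (intro pair_ev_self_pos) auto
  let ?bad = "(\<lambda>h. - pair_ev h a / pair_ev h g) ` insert g G"
  have "finite ?bad" using insert.hyps(1) by simp
  then obtain t where t: "t \<notin> ?bad"
    by (metis ex_new_if_finite infinite_UNIV_char_0)
  have "pair_ev h (\<lambda>i. a i + t * g i) \<noteq> 0" if h: "h \<in> insert g G" for h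
  proof (cases "pair_ev h g = 0")
    case True
    then show ?thesis using h gg a by (auto simp: pair_ev_line)
  next
    case False
    moreover have "t \<noteq> - pair_ev h a / pair_ev h g" using t h by blast
    ultimately show ?thesis by (simp add: pair_ev_line field_simps)
  qed
  then show ?case by blast
qed simp

definition line_through :: "('n \<Rightarrow> real) \<Rightarrow> ('n \<Rightarrow> real) \<Rightarrow> 'n \<Rightarrow> real poly" where
  "line_through a \<xi> i = [:a i, \<xi> i:]"

definition line_root :: "('n::finite \<Rightarrow> real) \<Rightarrow> ('n \<Rightarrow> real) \<Rightarrow> ('n \<Rightarrow> real) \<Rightarrow> real" where
  "line_root a \<xi> c = - pair_ev c a / pair_ev c \<xi>"

definition cross_form :: "('n::finite \<Rightarrow> real) \<Rightarrow> ('n \<Rightarrow> real) \<Rightarrow> ('n \<Rightarrow> real) \<Rightarrow> 'n \<Rightarrow> real" where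
  "cross_form \<xi> c c' = (\<lambda>i. pair_ev c' \<xi> * c i - pair_ev c \<xi> * c' i)"

lemma poly_spoly_eval_lin:
  "poly (spoly_eval (line_through a \<xi>) (lin c)) t = pair_ev c a + t * pair_ev c \<xi>"
  by (simp add: lin_def line_through_def spoly_eval_sum monomial_eval_single poly_sum pair_ev_def
      sum_distrib_left sum.distrib algebra_simps)

lemma pair_ev_cross_form:
  "pair_ev (cross_form \<xi> c c') a = pair_ev c' \<xi> * pair_ev c a - pair_ev c \<xi> * pair_ev c' a"
  by (simp add: cross_form_def pair_ev_def sum_subtractf sum_distrib_left algebra_simps)

lemma cross_form_nonzero:
  assumes "lin_indep2 c c'" "pair_ev c' \<xi> \<noteq> 0"
  shows "cross_form \<xi> c c' \<noteq> (\<lambda>_. 0)"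
proof
  assume "cross_form \<xi> c c' = (\<lambda>_. 0)"
  then have "\<forall>i. pair_ev c' \<xi> * c i + (- pair_ev c \<xi>) * c' i = 0"
    by (simp add: cross_form_def fun_eq_iff)
  then show False using assms unfolding lin_indep2_def by blast
qed

lemma poly_lin_at_line_root:
  assumes "pair_ev c' \<xi> \<noteq> 0"
  shows "poly (spoly_eval (line_through a \<xi>) (lin c)) (line_root a \<xi> c')
    = pair_ev (cross_form \<xi> c c') a / pair_ev c' \<xi>"
  using assms by (simp add: poly_spoly_eval_lin pair_ev_cross_form line_root_def field_simps)

lemma poly_at_line_root_if_lin_dvd:
  assumes "lin c dvd P" "pair_ev c \<xi> \<noteq> 0"
  shows "poly (spoly_eval (line_through a \<xi>) P) (line_root a \<xi> c) = 0"
proof -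
  have "poly (spoly_eval (line_through a \<xi>) (lin c)) (line_root a \<xi> c) = 0"
    using assms(2) by (simp add: poly_lin_at_line_root pair_ev_cross_form)
  moreover have "spoly_eval (line_through a \<xi>) (lin c) dvd spoly_eval (line_through a \<xi>) P"
    using assms(1) by (rule spoly_eval_dvd)
  ultimately show ?thesis by (auto elim: dvdE)
qed

lemma card_le_degree_if_distinct_line_roots:
  fixes \<gamma> :: "'j \<Rightarrow> 'n::finite \<Rightarrow> real"
  assumes "homogeneous k P" "spoly_eval (line_through a \<xi>) P \<noteq> 0"
    and "\<forall>j\<in>J. lin (\<gamma> j) dvd P" "\<forall>j\<in>J. pair_ev (\<gamma> j) \<xi> \<noteq> 0"
    and "inj_on (\<lambda>j. line_root a \<xi> (\<gamma> j)) J"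
  shows "card J \<le> k"
proof -
  let ?f = "spoly_eval (line_through a \<xi>) P"
  have "(\<lambda>j. line_root a \<xi> (\<gamma> j)) ` J \<subseteq> {t. poly ?f t = 0}"
    using assms(3,4) by (auto intro: poly_at_line_root_if_lin_dvd)
  then have "card J \<le> card {t. poly ?f t = 0}"
    using card_mono[OF poly_roots_finite[OF assms(2)]] card_image[OF assms(5)] by metis
  also have "\<dots> \<le> degree ?f"
    using assms(2) by (rule card_poly_roots_bound)
  also have "\<dots> \<le> k"
    using assms(1) by (intro degree_spoly_eval) (simp add: line_through_def)
  finally show ?thesis .
qed

lemma ex_point_off_cross_forms:
  fixes \<xi> \<beta> :: "'n::finite \<Rightarrow> real" and \<gamma> :: "'j \<Rightarrow> 'n \<Rightarrow> real" and \<mu> :: "'i \<Rightarrow> 'n \<Rightarrow> real"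
  assumes "finite J" "finite I"
    and "\<forall>j\<in>J. pair_ev (\<gamma> j) \<xi> \<noteq> 0" "\<forall>j\<in>J. \<forall>j'\<in>J. j \<noteq> j' \<longrightarrow> lin_indep2 (\<gamma> j) (\<gamma> j')"
    and "pair_ev \<beta> \<xi> \<noteq> 0" "\<forall>i\<in>I. lin_indep2 (\<mu> i) \<beta>"
  obtains a where
    "\<And>j j'. j \<in> J \<Longrightarrow> j' \<in> J \<Longrightarrow> j \<noteq> j' \<Longrightarrow> pair_ev (cross_form \<xi> (\<gamma> j) (\<gamma> j')) a \<noteq> 0"
    "\<And>i. i \<in> I \<Longrightarrow> pair_ev (cross_form \<xi> (\<mu> i) \<beta>) a \<noteq> 0"
proof -
  define G where "G = (\<lambda>(j, j'). cross_form \<xi> (\<gamma> j) (\<gamma> j'))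
      ` {(j, j'). j \<in> J \<and> j' \<in> J \<and> j \<noteq> j'} \<union> (\<lambda>i. cross_form \<xi> (\<mu> i) \<beta>) ` I"
  have "finite G"
    unfolding G_def using assms(1,2) by (auto intro: finite_subset[of _ "J \<times> J"])
  moreover have "(\<lambda>_. 0) \<notin> G"
  proof
    assume "(\<lambda>_. 0) \<in> G"
    then consider j j' where "j \<in> J" "j' \<in> J" "j \<noteq> j'" "cross_form \<xi> (\<gamma> j) (\<gamma> j') = (\<lambda>_. 0)"
      | i where "i \<in> I" "cross_form \<xi> (\<mu> i) \<beta> = (\<lambda>_. 0)"
      unfolding G_def by (auto simp: eq_commute)
    then show False
      by cases (use assms(3-6) cross_form_nonzero in metis)+
  qed
  ultimately obtain a where "\<forall>g\<in>G. pair_ev g a \<noteq> 0"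
    using ex_point_off_hyperplanes by blast
  then show ?thesis
    by (intro that) (auto simp: G_def)
qed

text \<open>The hypothesis on \<open>\<beta>\<close> certifies \<open>P \<noteq> 0\<close> without a multivariate nonvanishing
  argument: on a generic line, \<open>\<Prod> \<mu>\<^sub>i\<close> is nonzero at the root of \<open>\<beta>\<close>, hence so is \<open>P\<close>.\<close>

lemma card_linear_divisors_le_degree:
  fixes \<xi> \<beta> :: "'n::finite \<Rightarrow> real" and \<gamma> :: "'j \<Rightarrow> 'n \<Rightarrow> real" and \<mu> :: "'i \<Rightarrow> 'n \<Rightarrow> real"
  assumes "homogeneous k P" "finite J" "finite I"
    and "\<forall>j\<in>J. lin (\<gamma> j) dvd P" "\<forall>j\<in>J. pair_ev (\<gamma> j) \<xi> \<noteq> 0"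
    and "\<forall>j\<in>J. \<forall>j'\<in>J. j \<noteq> j' \<longrightarrow> lin_indep2 (\<gamma> j) (\<gamma> j')"
    and "lin \<beta> dvd (\<Prod>i\<in>I. lin (\<mu> i)) - P" "pair_ev \<beta> \<xi> \<noteq> 0"
    and "\<forall>i\<in>I. lin_indep2 (\<mu> i) \<beta>"
  shows "card J \<le> k"
proof -
  obtain a
    where a_pairs: "\<And>j j'. j \<in> J \<Longrightarrow> j' \<in> J \<Longrightarrow> j \<noteq> j' \<Longrightarrow> pair_ev (cross_form \<xi> (\<gamma> j) (\<gamma> j')) a \<noteq> 0"
      and a_\<beta>: "\<And>i. i \<in> I \<Longrightarrow> pair_ev (cross_form \<xi> (\<mu> i) \<beta>) a \<noteq> 0"
    using ex_point_off_cross_forms[OF assms(2,3,5,6,8,9)] by blast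
  let ?x = "line_through a \<xi>"
  show ?thesis
  proof (rule card_le_degree_if_distinct_line_roots[OF assms(1) _ assms(4,5)])
    show "spoly_eval ?x P \<noteq> 0"
    proof
      assume "spoly_eval ?x P = 0"
      then have "poly (spoly_eval ?x (\<Prod>i\<in>I. lin (\<mu> i))) (line_root a \<xi> \<beta>) = 0"
        using poly_at_line_root_if_lin_dvd[OF assms(7,8), of a] by (simp add: spoly_eval_diff)
      then obtain i where "i \<in> I" "poly (spoly_eval ?x (lin (\<mu> i))) (line_root a \<xi> \<beta>) = 0"
        using assms(3) by (auto simp: spoly_eval_prod poly_prod prod_zero_iff)
      then show False
        using a_\<beta> assms(8) by (simp add: poly_lin_at_line_root)
    qed
    show "inj_on (\<lambda>j. line_root a \<xi> (\<gamma> j)) J"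
    proof (rule inj_onI, rule ccontr)
      fix j j' assume jj': "j \<in> J" "j' \<in> J" "line_root a \<xi> (\<gamma> j) = line_root a \<xi> (\<gamma> j')" "j \<noteq> j'"
      then have "poly (spoly_eval ?x (lin (\<gamma> j))) (line_root a \<xi> (\<gamma> j')) = 0"
        using assms(5) by (metis dvd_refl poly_at_line_root_if_lin_dvd)
      then show False
        using a_pairs jj' assms(5) by (simp add: poly_lin_at_line_root)
    qed
  qed
qed

lemma is_path_append:
  "is_path E ie te p (xs @ ys) r \<longleftrightarrow> (\<exists>m. is_path E ie te p xs m \<and> is_path E ie te m ys r)"
  by (induction xs arbitrary: p) auto

lemma finite_desc_edges: "finite E \<Longrightarrow> finite (desc_edges E ie \<alpha> \<xi> r)"
  by (simp add: desc_edges_def out_edges_def)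

lemma ascending_rv_iff:
  assumes "axial E rv \<alpha>" "polarizing E \<alpha> \<xi>" "e \<in> E"
  shows "ascending \<alpha> \<xi> (rv e) \<longleftrightarrow> \<not> ascending \<alpha> \<xi> e"
  using assms by (auto simp: axial_def polarizing_def ascending_def pair_ev_uminus)

lemma rv_in_desc_edges:
  assumes "is_graph V E ie te rv" "axial E rv \<alpha>" "polarizing E \<alpha> \<xi>" "e \<in> E" "ascending \<alpha> \<xi> e"
  shows "rv e \<in> desc_edges E ie \<alpha> \<xi> (te e)"
  using assms ascending_rv_iff[OF assms(2,3,4)]
  by (auto simp: is_graph_def desc_edges_def out_edges_def)

lemma te_notin_flow_up_if_unique_asc_path:
  assumes "is_graph V E ie te rv" "axial E rv \<alpha>" "polarizing E \<alpha> \<xi>"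
    and "\<forall>es. asc_path E ie te \<alpha> \<xi> p es q \<longrightarrow> es = [e]"
    and "e' \<in> desc_edges E ie \<alpha> \<xi> q" "e' \<noteq> rv e"
  shows "te e' \<notin> flow_up V E ie te \<alpha> \<xi> p"
proof
  assume "te e' \<in> flow_up V E ie te \<alpha> \<xi> p"
  then obtain es where es: "asc_path E ie te \<alpha> \<xi> p es (te e')"
    by (auto simp: flow_up_def)
  have e': "e' \<in> E" "ie e' = q" "\<not> ascending \<alpha> \<xi> e'"
    using assms(5) by (auto simp: desc_edges_def out_edges_def)
  then have "asc_path E ie te \<alpha> \<xi> (te e') [rv e'] q"
    using assms(1) ascending_rv_iff[OF assms(2,3)] by (auto simp: is_graph_def asc_path_def)
  with es have "asc_path E ie te \<alpha> \<xi> p (es @ [rv e']) q"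
    by (auto simp: asc_path_def is_path_append)
  then have "rv e' = e"
    using assms(4) by (cases es) auto
  then show False
    using assms(1,6) e'(1) by (auto simp: is_graph_def)
qed

lemma thom_classesD:
  assumes "thom_classes V E ie te \<alpha> \<xi> \<tau>" "p \<in> V"
  shows "\<And>q. q \<in> V \<Longrightarrow> homogeneous (sigma E ie \<alpha> \<xi> p) (\<tau> p q)"
    and "\<And>e. e \<in> E \<Longrightarrow> lin (\<alpha> e) dvd \<tau> p (ie e) - \<tau> p (te e)"
    and "\<And>q. q \<in> V - flow_up V E ie te \<alpha> \<xi> p \<Longrightarrow> \<tau> p q = 0"
    and "\<tau> p p = (\<Prod>e\<in>desc_edges E ie \<alpha> \<xi> p. lin (\<alpha> e))"
  using assms by (auto simp: thom_classes_def GKM_ring_deg_def GKM_ring_def)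

lemma lin_dvd_thom_class_if_unique_asc_path:
  assumes "is_graph V E ie te rv" "axial E rv \<alpha>" "polarizing E \<alpha> \<xi>"
    and "thom_classes V E ie te \<alpha> \<xi> \<tau>" "p \<in> V"
    and "\<forall>es. asc_path E ie te \<alpha> \<xi> p es q \<longrightarrow> es = [e]"
    and "e' \<in> desc_edges E ie \<alpha> \<xi> q" "e' \<noteq> rv e"
  shows "lin (\<alpha> e') dvd \<tau> p q"
proof -
  have e': "e' \<in> E" "ie e' = q"
    using assms(7) by (auto simp: desc_edges_def out_edges_def)
  have "te e' \<in> V - flow_up V E ie te \<alpha> \<xi> p"
    using te_notin_flow_up_if_unique_asc_path[OF assms(1-3,6-8)] assms(1) e'(1)
    by (auto simp: is_graph_def)
  then have "\<tau> p (te e') = 0"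
    by (rule thom_classesD(3)[OF assms(4,5)])
  then show ?thesis
    using thom_classesD(2)[OF assms(4,5) e'(1)] e'(2) by simp
qed

theorem theorem4p2:
  fixes V :: "'v set" and E :: "'e set" and ie te :: "'e \<Rightarrow> 'v" and rv :: "'e \<Rightarrow> 'e"
    and d :: nat and \<alpha> :: "'e \<Rightarrow> 'n::finite \<Rightarrow> real" and \<theta> :: "'e \<Rightarrow> 'e \<Rightarrow> 'e"
    and \<xi> :: "'n \<Rightarrow> real" and \<tau> :: "'v \<Rightarrow> 'v \<Rightarrow> 'n spoly"
    and e :: 'e and p q :: 'v
  assumes "is_graph V E ie te rv"
    and "connected_graph V E ie te"
    and "regular d V E ie"
    and "GKM_axial V E ie rv \<alpha>"
    and "compatible_connection E ie te rv \<alpha> \<theta>"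
    and "polarizing E \<alpha> \<xi>"
    and "thom_classes V E ie te \<alpha> \<xi> \<tau>"
    and "e \<in> E" and "ie e = p" and "te e = q" and "ascending \<alpha> \<xi> e"
    and "\<forall>es. asc_path E ie te \<alpha> \<xi> p es q \<longrightarrow> es = [e]"
  shows "sigma E ie \<alpha> \<xi> q \<le> sigma E ie \<alpha> \<xi> p + 1"
proof -
  have graph: "finite E" "p \<in> V" "q \<in> V"
    using assms(1,8-10) by (auto simp: is_graph_def)
  have axial: "axial E rv \<alpha>"
    using assms(4) by (simp add: GKM_axial_def)
  have indep: "\<And>r. r \<in> V \<Longrightarrow> \<forall>e1\<in>out_edges E ie r. \<forall>e2\<in>out_edges E ie r.
      e1 \<noteq> e2 \<longrightarrow> lin_indep2 (\<alpha> e1) (\<alpha> e2)"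
    using assms(4) by (simp add: GKM_axial_def)
  have pol: "\<And>e. e \<in> E \<Longrightarrow> pair_ev (\<alpha> e) \<xi> \<noteq> 0"
    using assms(6) by (simp add: polarizing_def)
  define D where "D = desc_edges E ie \<alpha> \<xi> q - {rv e}"
  have D: "D \<subseteq> out_edges E ie q"
    by (auto simp: D_def desc_edges_def)
  have "card D \<le> sigma E ie \<alpha> \<xi> p"
  proof (rule card_linear_divisors_le_degree[where \<xi> = \<xi>])
    show "homogeneous (sigma E ie \<alpha> \<xi> p) (\<tau> p q)"
      using thom_classesD(1)[OF assms(7) graph(2,3)] .
    show "\<forall>j\<in>D. lin (\<alpha> j) dvd \<tau> p q"
      using lin_dvd_thom_class_if_unique_asc_path[OF assms(1) axial assms(6,7) graph(2) assms(12)]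
      by (auto simp: D_def)
    show "lin (\<alpha> e) dvd (\<Prod>e\<in>desc_edges E ie \<alpha> \<xi> p. lin (\<alpha> e)) - \<tau> p q"
      using thom_classesD(2,4)[OF assms(7) graph(2)] assms(8-10) by metis
    show "\<forall>i\<in>desc_edges E ie \<alpha> \<xi> p. lin_indep2 (\<alpha> i) (\<alpha> e)"
      using indep[OF graph(2)] assms(8,9,11) by (auto simp: desc_edges_def out_edges_def)
    show "\<forall>j\<in>D. \<forall>j'\<in>D. j \<noteq> j' \<longrightarrow> lin_indep2 (\<alpha> j) (\<alpha> j')"
      using indep[OF graph(3)] D by blast
  qed (use graph(1) finite_desc_edges pol D assms(8) in \<open>auto simp: D_def out_edges_def\<close>)
  moreover have "card D = sigma E ie \<alpha> \<xi> q - 1"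
    unfolding D_def sigma_def
    using rv_in_desc_edges[OF assms(1) axial assms(6,8,11)] assms(10) graph(1) finite_desc_edges
    by (simp add: card_Diff_singleton)
  ultimately show ?thesis by linarith
qed

end
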